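(* Let $D$ be an associative division algebra finite-dimensional over its center $F$, let $\sigma\in\mathrm{Aut}(D)$ be such that $\sigma|_F$ has finite order $m$, let $F_0=\mathrm{Fix}(\sigma)\cap F$, and let $A=(D,\sigma,d)$ with $d\in D\setminus F_0$. Then every automorphism of $A$ of the form $H_{\mathrm{id},k}$ ($k\in F^\times$, $N_{F/F_0}(k)=1$) is an inner automorphism $G_c(\sum_{i=0}^{m-1}a_it^i)=(c^{-1}\sum_{i=0}^{m-1}a_it^i)c$ for some $c\in F^\times$ satisfying $k=\sigma(c)c^{-1}$.
   Context: $N_{F/F_0}$ is the norm of the cyclic Galois extension $F/F_0$. $D[t;\sigma]$ is the twisted polynomial ring: polynomials $\sum a_it^i$ ($a_i\in D$), multiplication determined by $ta=\sigma(a)t$. For $d\in D^\times$, $(D,\sigma,d)$ is the set of polynomials of degree $<m$ in $D[t;\sigma]$ with multiplication (used in the formula for $G_c$) $g\circ h=$ remainder of $gh$ on right division by $t^m-d$; it is a unital algebra over $F_0$ containing $D$. For $k\in F^\times$, $H_{\mathrm{id},k}(\sum_{i=0}^{m-1}a_it^i)=a_0+\sum_{i=1}^{m-1}a_i\big(\prod_{l=0}^{i-1}\sigma^l(k)\big)t^i$. *)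

theory Defs
  imports Main
begin

definition center :: "'a::division_ring set" where
  "center = {z. \<forall>x. z * x = x * z}"

definition fin_dim_over_center :: "'a::division_ring itself \<Rightarrow> bool" where
  "fin_dim_over_center _ \<longleftrightarrow>
     (\<exists>B::'a set. finite B \<and>
        (\<forall>x. \<exists>f. (\<forall>b\<in>B. f b \<in> center) \<and> x = (\<Sum>b\<in>B. f b * b)))"

definition ring_aut :: "('a::division_ring \<Rightarrow> 'a) \<Rightarrow> bool" where
  "ring_aut \<sigma> \<longleftrightarrow> bij \<sigma> \<and> (\<forall>x y. \<sigma> (x + y) = \<sigma> x + \<sigma> y)
     \<and> (\<forall>x y. \<sigma> (x * y) = \<sigma> x * \<sigma> y) \<and> \<sigma> 1 = 1"

definition order_on_center :: "('a::division_ring \<Rightarrow> 'a) \<Rightarrow> nat \<Rightarrow> bool" where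
  "order_on_center \<sigma> m \<longleftrightarrow> 0 < m \<and> (\<forall>z\<in>center. (\<sigma> ^^ m) z = z)
     \<and> (\<forall>j. 0 < j \<and> j < m \<longrightarrow> (\<exists>z\<in>center. (\<sigma> ^^ j) z \<noteq> z))"

definition fixed_center :: "('a::division_ring \<Rightarrow> 'a) \<Rightarrow> 'a set" where
  "fixed_center \<sigma> = {z \<in> center. \<sigma> z = z}"

definition norm_F :: "('a::division_ring \<Rightarrow> 'a) \<Rightarrow> nat \<Rightarrow> 'a \<Rightarrow> 'a" where
  "norm_F \<sigma> m k = prod_list (map (\<lambda>l. (\<sigma> ^^ l) k) [0..<m])"

text \<open>Twisted polynomials in D[t;sigma] are coefficient functions nat => D
  (finitely supported ones are the actual polynomials).  Product:
  (a_i t^i)(b_j t^j) = a_i sigma^i(b_j) t^(i+j).\<close>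
definition tw_mult :: "('a::division_ring \<Rightarrow> 'a) \<Rightarrow> (nat \<Rightarrow> 'a) \<Rightarrow> (nat \<Rightarrow> 'a) \<Rightarrow> nat \<Rightarrow> 'a" where
  "tw_mult \<sigma> a b n = (\<Sum>i\<le>n. a i * (\<sigma> ^^ i) (b (n - i)))"

definition tw_poly :: "(nat \<Rightarrow> 'a::zero) \<Rightarrow> bool" where
  "tw_poly q \<longleftrightarrow> (\<exists>N. \<forall>i\<ge>N. q i = 0)"

definition tw_add :: "(nat \<Rightarrow> 'a::plus) \<Rightarrow> (nat \<Rightarrow> 'a) \<Rightarrow> nat \<Rightarrow> 'a" where
  "tw_add a b = (\<lambda>i. a i + b i)"

definition tm_minus_d :: "nat \<Rightarrow> 'a::ring_1 \<Rightarrow> nat \<Rightarrow> 'a" where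
  "tm_minus_d m d = (\<lambda>i. (if i = m then 1 else 0) - (if i = 0 then d else 0))"

definition tw_const :: "'a::zero \<Rightarrow> nat \<Rightarrow> 'a" where
  "tw_const c = (\<lambda>i. if i = 0 then c else 0)"

text \<open>Underlying set of A = (D,sigma,d): polynomials of degree < m.\<close>
definition petit_carrier :: "nat \<Rightarrow> (nat \<Rightarrow> 'a::zero) set" where
  "petit_carrier m = {a. \<forall>i\<ge>m. a i = 0}"

text \<open>Multiplication of A: remainder of gh on right division by t^m - d,
  i.e. the unique r of degree < m with gh = q (t^m - d) + r.\<close>
definition petit_mult :: "('a::division_ring \<Rightarrow> 'a) \<Rightarrow> nat \<Rightarrow> 'a
    \<Rightarrow> (nat \<Rightarrow> 'a) \<Rightarrow> (nat \<Rightarrow> 'a) \<Rightarrow> nat \<Rightarrow> 'a" where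
  "petit_mult \<sigma> m d g h = (THE r. r \<in> petit_carrier m \<and>
      (\<exists>q. tw_poly q \<and> tw_mult \<sigma> g h = tw_add (tw_mult \<sigma> q (tm_minus_d m d)) r))"

definition petit_aut :: "('a::division_ring \<Rightarrow> 'a) \<Rightarrow> nat \<Rightarrow> 'a
    \<Rightarrow> ((nat \<Rightarrow> 'a) \<Rightarrow> (nat \<Rightarrow> 'a)) \<Rightarrow> bool" where
  "petit_aut \<sigma> m d H \<longleftrightarrow>
     bij_betw H (petit_carrier m) (petit_carrier m)
     \<and> (\<forall>x\<in>petit_carrier m. \<forall>y\<in>petit_carrier m. H (tw_add x y) = tw_add (H x) (H y))
     \<and> (\<forall>x\<in>petit_carrier m. \<forall>y\<in>petit_carrier m.
            H (petit_mult \<sigma> m d x y) = petit_mult \<sigma> m d (H x) (H y))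
     \<and> (\<forall>c\<in>fixed_center \<sigma>. \<forall>x\<in>petit_carrier m. H (\<lambda>i. c * x i) = (\<lambda>i. c * H x i))"

definition H_id :: "('a::division_ring \<Rightarrow> 'a) \<Rightarrow> nat \<Rightarrow> 'a \<Rightarrow> (nat \<Rightarrow> 'a) \<Rightarrow> nat \<Rightarrow> 'a" where
  "H_id \<sigma> m k a = (\<lambda>i. if i < m then a i * prod_list (map (\<lambda>l. (\<sigma> ^^ l) k) [0..<i]) else 0)"

definition G_inner :: "('a::division_ring \<Rightarrow> 'a) \<Rightarrow> nat \<Rightarrow> 'a \<Rightarrow> 'a \<Rightarrow> (nat \<Rightarrow> 'a) \<Rightarrow> nat \<Rightarrow> 'a" where
  "G_inner \<sigma> m d c x =
     petit_mult \<sigma> m d (petit_mult \<sigma> m d (tw_const (inverse c)) x) (tw_const c)"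

end

theory Submission
  imports Defs
begin

text \<open>Write \<open>N\<^sub>i(k) = k \<sigma>(k) \<dots> \<sigma>\<^sup>i\<^sup>-\<^sup>1(k)\<close>, so that \<open>H\<^sub>i\<^sub>d\<^sub>,\<^sub>k\<close> multiplies the
  coefficient of \<open>t\<^sup>i\<close> by \<open>N\<^sub>i(k)\<close> and \<open>N\<^sub>m(k)\<close> is the norm of \<open>k\<close>. The distinct powers
  \<open>\<sigma>\<^sup>i|\<^sub>F\<close>, \<open>i < m\<close>, are linearly independent over \<open>F\<close> (Dedekind), so some \<open>x \<in> F\<close> gives
  \<open>b = \<Sum>\<^sub>i\<^sub><\<^sub>m N\<^sub>i(k) \<sigma>\<^sup>i(x) \<noteq> 0\<close>; as \<open>N\<^sub>m(k) = 1\<close> the sum telescopes to \<open>k \<sigma>(b) = b\<close>, so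
  \<open>c = b\<^sup>-\<^sup>1\<close> satisfies \<open>\<sigma>(c) = k c\<close> (Hilbert 90). Then \<open>\<sigma>\<^sup>i(c) = N\<^sub>i(k) c\<close>, and since
  \<open>c\<close> is central, \<open>(c\<^sup>-\<^sup>1 a t\<^sup>i) c = c\<^sup>-\<^sup>1 a \<sigma>\<^sup>i(c) t\<^sup>i = a N\<^sub>i(k) t\<^sup>i\<close>; no reduction modulo
  \<open>t\<^sup>m - d\<close> occurs.\<close>

lemma ring_aut_add: "ring_aut \<sigma> \<Longrightarrow> \<sigma> (x + y) = \<sigma> x + \<sigma> y"
  and ring_aut_mult: "ring_aut \<sigma> \<Longrightarrow> \<sigma> (x * y) = \<sigma> x * \<sigma> y"
  and ring_aut_one: "ring_aut \<sigma> \<Longrightarrow> \<sigma> 1 = 1"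
  and ring_aut_bij: "ring_aut \<sigma> \<Longrightarrow> bij \<sigma>"
  by (simp_all add: ring_aut_def)

lemma ring_aut_zero: "ring_aut \<sigma> \<Longrightarrow> \<sigma> 0 = 0"
  using ring_aut_add[of \<sigma> 0 0] by simp

lemma ring_aut_diff: "ring_aut \<sigma> \<Longrightarrow> \<sigma> (x - y) = \<sigma> x - \<sigma> y"
  using ring_aut_add[of \<sigma> "x - y" y] by (simp add: algebra_simps)

lemma ring_aut_eq_iff: "ring_aut \<sigma> \<Longrightarrow> \<sigma> x = \<sigma> y \<longleftrightarrow> x = y"
  using bij_is_inj[OF ring_aut_bij] by (auto dest: injD)

lemma ring_aut_eq_0_iff: "ring_aut \<sigma> \<Longrightarrow> \<sigma> x = 0 \<longleftrightarrow> x = 0"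
  using ring_aut_eq_iff[of \<sigma> x 0] by (simp add: ring_aut_zero)

lemma ring_aut_inverse:
  assumes "ring_aut (\<sigma> :: 'a::division_ring \<Rightarrow> 'a)"
  shows "\<sigma> (inverse x) = inverse (\<sigma> x)"
proof (cases "x = 0")
  case True
  then show ?thesis using ring_aut_zero[OF assms] by simp
next
  case False
  then have "\<sigma> x * \<sigma> (inverse x) = 1"
    using assms by (simp flip: ring_aut_mult add: ring_aut_one)
  then show ?thesis by (rule inverse_unique[symmetric])
qed

lemma ring_aut_sum: "ring_aut \<sigma> \<Longrightarrow> \<sigma> (sum f S) = (\<Sum>i\<in>S. \<sigma> (f i))"
  using sum_comp_morphism[of \<sigma> f S] by (simp add: ring_aut_zero ring_aut_add comp_def)

lemma ring_aut_prod_list: "ring_aut \<sigma> \<Longrightarrow> \<sigma> (prod_list xs) = prod_list (map \<sigma> xs)"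
  by (induction xs) (simp_all add: ring_aut_one ring_aut_mult)

lemma ring_aut_funpow: "ring_aut \<sigma> \<Longrightarrow> ring_aut (\<sigma> ^^ n)"
proof (induction n)
  case 0
  then show ?case by (simp add: ring_aut_def bij_id[unfolded id_def])
next
  case (Suc n)
  then have "bij (\<sigma> \<circ> \<sigma> ^^ n)" by (simp add: bij_comp ring_aut_bij)
  with Suc show ?case by (simp add: ring_aut_def comp_def)
qed

lemma center_iff: "z \<in> center \<longleftrightarrow> (\<forall>x. z * x = x * z)"
  by (simp add: center_def)

lemma center_commute: "z \<in> center \<Longrightarrow> z * x = x * z"
  by (simp add: center_iff)

lemma center_one: "1 \<in> center"
  by (simp add: center_iff)

lemma center_mult: "a \<in> center \<Longrightarrow> b \<in> center \<Longrightarrow> a * b \<in> center"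
  unfolding center_iff by (metis mult.assoc)

lemma center_diff: "a \<in> center \<Longrightarrow> b \<in> center \<Longrightarrow> a - b \<in> center"
  unfolding center_iff by (metis left_diff_distrib right_diff_distrib)

lemma center_sum: "(\<And>i. i \<in> S \<Longrightarrow> f i \<in> center) \<Longrightarrow> sum f S \<in> center"
  unfolding center_iff by (metis (mono_tags, lifting) sum.cong sum_distrib_left sum_distrib_right)

lemma center_prod_list: "(\<And>x. x \<in> set xs \<Longrightarrow> x \<in> center) \<Longrightarrow> prod_list xs \<in> center"
  by (induction xs) (simp_all add: center_one center_mult)

lemma center_inverse:
  assumes "(a :: 'a::division_ring) \<in> center"
  shows "inverse a \<in> center"
  unfolding center_iff
proof
  fix x
  show "inverse a * x = x * inverse a"
  proof (cases "a = 0")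
    case False
    have "inverse a * x = inverse a * (x * a) * inverse a"
      using False by (simp add: mult.assoc)
    also have "\<dots> = inverse a * (a * x) * inverse a"
      using center_commute[OF assms, of x] by simp
    also have "\<dots> = x * inverse a"
      using False by (simp flip: mult.assoc)
    finally show ?thesis .
  qed simp
qed

lemma ring_aut_center:
  assumes "ring_aut \<tau>" and "z \<in> center"
  shows "\<tau> z \<in> center"
  unfolding center_iff
proof
  fix x
  obtain y where "x = \<tau> y"
    using ring_aut_bij[OF assms(1)] by (metis bij_pointE)
  moreover have "\<tau> z * \<tau> y = \<tau> y * \<tau> z"
    using center_commute[OF assms(2), of y] ring_aut_mult[OF assms(1)] by metis
  ultimately show "\<tau> z * x = x * \<tau> z" by simp
qed

lemma ring_auts_independent_on_center:
  assumes "finite T"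
    and "\<And>i. i \<in> T \<Longrightarrow> ring_aut (\<tau> i)"
    and "\<And>i j. i \<in> T \<Longrightarrow> j \<in> T \<Longrightarrow> i \<noteq> j \<Longrightarrow> \<exists>z\<in>center. \<tau> i z \<noteq> \<tau> j z"
    and "\<And>i. i \<in> T \<Longrightarrow> c i \<in> center"
    and "\<And>a. a \<in> center \<Longrightarrow> (\<Sum>i\<in>T. c i * \<tau> i a) = 0"
  shows "\<forall>i\<in>T. c i = 0"
  using assms
proof (induction T arbitrary: c rule: finite_induct)
  case empty
  then show ?case by simp
next
  case (insert j T)
  have rest: "c i = 0" if i: "i \<in> T" for i
  proof -
    obtain z where z: "z \<in> center" "\<tau> i z \<noteq> \<tau> j z"
      using insert.prems(2) i insert.hyps(2) by blast
    define c' where "c' l = c l * (\<tau> l z - \<tau> j z)" for l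
    \<comment> \<open>multiplying the relation at \<open>z a\<close> and at \<open>a\<close> by \<open>\<tau>\<^sub>j(z)\<close> and subtracting kills the \<open>j\<close>-term\<close>
    have "(\<Sum>l\<in>T. c' l * \<tau> l a) = 0" if a: "a \<in> center" for a
    proof -
      have summand: "c' l * \<tau> l a = c l * \<tau> l (z * a) - \<tau> j z * (c l * \<tau> l a)"
        if "l \<in> insert j T" for l
        using that insert.prems(1,3) center_commute[of "c l" "\<tau> j z"]
        by (simp add: c'_def ring_aut_mult algebra_simps)
      have "(\<Sum>l\<in>T. c' l * \<tau> l a) = (\<Sum>l\<in>insert j T. c' l * \<tau> l a)"
        using insert.hyps by (simp add: c'_def)
      also have "\<dots> = (\<Sum>l\<in>insert j T. c l * \<tau> l (z * a))
                     - \<tau> j z * (\<Sum>l\<in>insert j T. c l * \<tau> l a)"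
        by (simp add: summand sum_subtractf sum_distrib_left)
      also have "\<dots> = 0"
        using insert.prems(4)[OF a] insert.prems(4)[OF center_mult[OF z(1) a]] by simp
      finally show ?thesis .
    qed
    moreover have "c' l \<in> center" if "l \<in> T" for l
      using that insert.prems(1,3) z(1)
      by (simp add: c'_def center_mult center_diff ring_aut_center)
    ultimately have "c' i = 0"
      using insert.IH[of c'] insert.prems(1,2) i by blast
    then show ?thesis using z(2) by (simp add: c'_def)
  qed
  then have "c j = (\<Sum>l\<in>insert j T. c l * \<tau> l 1)"
    using insert.hyps insert.prems(1) by (simp add: ring_aut_one)
  then have "c j = 0"
    using insert.prems(4) center_one by simp
  with rest show ?case by simp
qed

lemma order_on_center_funpow_distinct:
  assumes "ring_aut \<sigma>" and "order_on_center \<sigma> m"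
    and "i < m" and "j < m" and "i \<noteq> j"
  shows "\<exists>z\<in>center. (\<sigma> ^^ i) z \<noteq> (\<sigma> ^^ j) z"
proof -
  have less: "\<exists>z\<in>center. (\<sigma> ^^ i) z \<noteq> (\<sigma> ^^ j) z" if "i < j" "j < m" for i j
  proof -
    have "0 < j - i" "j - i < m" using that by auto
    then obtain z where z: "z \<in> center" "(\<sigma> ^^ (j - i)) z \<noteq> z"
      using assms(2) unfolding order_on_center_def by blast
    have "(\<sigma> ^^ j) z = (\<sigma> ^^ (i + (j - i))) z"
      using that by simp
    also have "\<dots> = (\<sigma> ^^ i) ((\<sigma> ^^ (j - i)) z)"
      by (simp only: funpow_add comp_apply)
    finally have "(\<sigma> ^^ j) z = (\<sigma> ^^ i) ((\<sigma> ^^ (j - i)) z)" .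
    then show ?thesis
      using z ring_aut_eq_iff[OF ring_aut_funpow[OF assms(1)]] by metis
  qed
  show ?thesis
    using less[of i j] less[of j i] assms(3-5) by (metis linorder_neqE_nat)
qed

definition partial_norm :: "('a::division_ring \<Rightarrow> 'a) \<Rightarrow> 'a \<Rightarrow> nat \<Rightarrow> 'a" where
  "partial_norm \<sigma> k i = prod_list (map (\<lambda>l. (\<sigma> ^^ l) k) [0..<i])"

lemma partial_norm_0: "partial_norm \<sigma> k 0 = 1"
  by (simp add: partial_norm_def)

lemma partial_norm_Suc: "partial_norm \<sigma> k (Suc i) = partial_norm \<sigma> k i * (\<sigma> ^^ i) k"
  by (simp add: partial_norm_def)

lemma norm_F_eq_partial_norm: "norm_F \<sigma> m k = partial_norm \<sigma> k m"
  by (simp add: norm_F_def partial_norm_def)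

lemma H_id_eq_partial_norm:
  "H_id \<sigma> m k a = (\<lambda>i. if i < m then a i * partial_norm \<sigma> k i else 0)"
  unfolding H_id_def partial_norm_def by (rule refl)

lemma partial_norm_center: "ring_aut \<sigma> \<Longrightarrow> k \<in> center \<Longrightarrow> partial_norm \<sigma> k i \<in> center"
  unfolding partial_norm_def
  by (rule center_prod_list) (auto intro: ring_aut_center[OF ring_aut_funpow])

lemma partial_norm_nonzero: "ring_aut \<sigma> \<Longrightarrow> k \<noteq> 0 \<Longrightarrow> partial_norm \<sigma> k i \<noteq> 0"
  by (induction i) (simp_all add: partial_norm_0 partial_norm_Suc ring_aut_eq_0_iff ring_aut_funpow)

lemma mult_ring_aut_partial_norm:
  assumes "ring_aut \<sigma>"
  shows "k * \<sigma> (partial_norm \<sigma> k i) = partial_norm \<sigma> k (Suc i)"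
proof -
  have "partial_norm \<sigma> k (Suc i) = k * prod_list (map (\<lambda>l. (\<sigma> ^^ Suc l) k) [0..<i])"
    unfolding partial_norm_def upt_conv_Cons[OF zero_less_Suc] One_nat_def
    by (simp only: map_Suc_upt[symmetric] map_map comp_def list.map prod_list.Cons funpow_0 id_apply)
  then show ?thesis
    using assms by (simp add: partial_norm_def ring_aut_prod_list comp_def)
qed

lemma funpow_eigenvector:
  assumes "ring_aut \<sigma>" and "k \<in> center" and "\<sigma> c = k * c"
  shows "(\<sigma> ^^ i) c = partial_norm \<sigma> k i * c"
proof (induction i)
  case 0
  then show ?case by (simp add: partial_norm_0)
next
  case (Suc i)
  have "(\<sigma> ^^ Suc i) c = (\<sigma> ^^ i) (k * c)"
    using assms(3) by (simp only: funpow_Suc_right comp_apply)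
  also have "\<dots> = (\<sigma> ^^ i) k * (partial_norm \<sigma> k i * c)"
    using Suc ring_aut_mult[OF ring_aut_funpow[OF assms(1)]] by simp
  also have "\<dots> = partial_norm \<sigma> k (Suc i) * c"
    using center_commute[OF ring_aut_center[OF ring_aut_funpow[OF assms(1)] assms(2)]]
    by (simp add: partial_norm_Suc mult.assoc)
  finally show ?case .
qed

lemma hilbert90:
  assumes \<sigma>: "ring_aut \<sigma>" and ord: "order_on_center \<sigma> m"
    and k: "k \<in> center" "k \<noteq> 0" and norm: "norm_F \<sigma> m k = 1"
  shows "\<exists>c\<in>center. c \<noteq> 0 \<and> \<sigma> c = k * c"
proof -
  have "0 < m" using ord by (simp add: order_on_center_def)
  then have "\<not> (\<forall>i<m. partial_norm \<sigma> k i = 0)"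
    using partial_norm_nonzero[OF \<sigma> k(2)] by blast
  then obtain x where x: "x \<in> center" "(\<Sum>i<m. partial_norm \<sigma> k i * (\<sigma> ^^ i) x) \<noteq> 0"
    using ring_auts_independent_on_center[of "{..<m}" "\<lambda>i. \<sigma> ^^ i" "partial_norm \<sigma> k"]
      ring_aut_funpow[OF \<sigma>] order_on_center_funpow_distinct[OF \<sigma> ord]
      partial_norm_center[OF \<sigma> k(1)]
    by auto
  define g where "g i = partial_norm \<sigma> k i * (\<sigma> ^^ i) x" for i
  define b where "b = (\<Sum>i<m. g i)"
  have b: "b \<in> center" "b \<noteq> 0"
    using x(2) by (auto simp: b_def g_def intro!: center_sum center_mult x(1)
        partial_norm_center[OF \<sigma> k(1)] ring_aut_center[OF ring_aut_funpow[OF \<sigma>]])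
  have "g m = g 0"
    using norm ord x(1) by (simp add: g_def norm_F_eq_partial_norm partial_norm_0 order_on_center_def)
  have "k * \<sigma> b = (\<Sum>i<m. g (Suc i))"
    using \<sigma> by (simp add: b_def g_def ring_aut_sum ring_aut_mult sum_distrib_left mult.assoc
        flip: mult_ring_aut_partial_norm)
  also have "\<dots> = b"
    using \<open>g m = g 0\<close> sum.lessThan_Suc_shift[of g m] by (simp add: b_def)
  finally have "\<sigma> b = inverse k * b"
    using k(2) by (metis left_inverse mult.assoc mult_1_left)
  then have "\<sigma> (inverse b) = k * inverse b"
    using b k center_commute[OF k(1)]
    by (simp add: ring_aut_inverse[OF \<sigma>] nonzero_inverse_mult_distrib)
  moreover have "inverse b \<noteq> 0"
    using b(2) by simp
  ultimately show ?thesis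
    using center_inverse[OF b(1)] by blast
qed

lemma tw_mult_tm_minus_d:
  assumes "ring_aut \<sigma>" and "0 < m"
  shows "tw_mult \<sigma> q (tm_minus_d m d) n
           = (if m \<le> n then q (n - m) else 0) - q n * (\<sigma> ^^ n) d"
proof -
  have "tw_mult \<sigma> q (tm_minus_d m d) n
      = (\<Sum>i\<le>n. (if i = n - m \<and> m \<le> n then q i else 0) - (if i = n then q i * (\<sigma> ^^ i) d else 0))"
    unfolding tw_mult_def using assms ring_aut_funpow[OF assms(1)]
    by (intro sum.cong) (auto simp: tm_minus_d_def ring_aut_diff ring_aut_one ring_aut_zero)
  then show ?thesis
    by (simp add: sum_subtractf)
qed

text \<open>A product of degree \<open>< m\<close> in \<open>D[t;\<sigma>]\<close> is its own remainder: comparing the top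
  coefficient of a nonzero \<open>q\<close> in \<open>q (t\<^sup>m - d) + r\<close> shows the quotient must vanish.\<close>
lemma petit_mult_eqI:
  assumes \<sigma>: "ring_aut \<sigma>" and m: "0 < m"
    and deg: "tw_mult \<sigma> g h \<in> petit_carrier m"
  shows "petit_mult \<sigma> m d g h = tw_mult \<sigma> g h"
  unfolding petit_mult_def
proof (rule the_equality)
  have zero: "tw_mult \<sigma> (\<lambda>_. 0) f = (\<lambda>_. 0)" for f
    by (simp add: tw_mult_def fun_eq_iff)
  show "tw_mult \<sigma> g h \<in> petit_carrier m \<and> (\<exists>q. tw_poly q \<and>
      tw_mult \<sigma> g h = tw_add (tw_mult \<sigma> q (tm_minus_d m d)) (tw_mult \<sigma> g h))"
    using deg by (intro conjI exI[of _ "\<lambda>_. 0"]) (simp_all add: zero tw_poly_def tw_add_def)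
  fix r
  assume "r \<in> petit_carrier m \<and> (\<exists>q. tw_poly q \<and>
      tw_mult \<sigma> g h = tw_add (tw_mult \<sigma> q (tm_minus_d m d)) r)"
  then obtain q where r: "r \<in> petit_carrier m" and q: "tw_poly q"
    and eq: "tw_mult \<sigma> g h = tw_add (tw_mult \<sigma> q (tm_minus_d m d)) r"
    by blast
  have "q = (\<lambda>_. 0)"
  proof (rule ccontr)
    assume "q \<noteq> (\<lambda>_. 0)"
    then have ne: "{i. q i \<noteq> 0} \<noteq> {}" by auto
    obtain N where "\<forall>i\<ge>N. q i = 0" using q by (auto simp: tw_poly_def)
    then have "{i. q i \<noteq> 0} \<subseteq> {..<N}" by (auto simp: not_less[symmetric])
    then have fin: "finite {i. q i \<noteq> 0}" by (rule finite_subset) simp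
    define M where "M = Max {i. q i \<noteq> 0}"
    have "q M \<noteq> 0" using Max_in[OF fin ne] by (simp add: M_def)
    have "q (M + m) = 0"
    proof (rule ccontr)
      assume "q (M + m) \<noteq> 0"
      then have "M + m \<le> M" unfolding M_def by (rule Max_ge[OF fin, simplified])
      with m show False by simp
    qed
    have "tw_mult \<sigma> g h (M + m) = tw_mult \<sigma> q (tm_minus_d m d) (M + m) + r (M + m)"
      using eq by (simp add: tw_add_def)
    also have "\<dots> = q M"
      using r \<open>q (M + m) = 0\<close> by (simp add: tw_mult_tm_minus_d[OF \<sigma> m] petit_carrier_def)
    finally have "q M = 0"
      using deg by (simp add: petit_carrier_def)
    with \<open>q M \<noteq> 0\<close> show False ..
  qed
  with eq show "r = tw_mult \<sigma> g h"
    by (simp add: zero tw_add_def fun_eq_iff)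
qed

lemma tw_mult_const_left: "tw_mult \<sigma> (tw_const a) x n = a * x n"
proof -
  have "tw_mult \<sigma> (tw_const a) x n = (\<Sum>i\<le>n. if i = 0 then a * x n else 0)"
    unfolding tw_mult_def tw_const_def by (rule sum.cong) auto
  then show ?thesis by simp
qed

lemma tw_mult_const_right:
  assumes "ring_aut \<sigma>"
  shows "tw_mult \<sigma> y (tw_const c) n = y n * (\<sigma> ^^ n) c"
proof -
  have "tw_mult \<sigma> y (tw_const c) n = (\<Sum>i\<le>n. if i = n then y n * (\<sigma> ^^ n) c else 0)"
    unfolding tw_mult_def tw_const_def
    by (rule sum.cong) (auto simp: ring_aut_zero[OF ring_aut_funpow[OF assms]])
  then show ?thesis by simp
qed

lemma G_inner_eq:
  assumes "ring_aut \<sigma>" and "0 < m" and "x \<in> petit_carrier m"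
  shows "G_inner \<sigma> m d c x = (\<lambda>n. inverse c * x n * (\<sigma> ^^ n) c)"
proof -
  have "petit_mult \<sigma> m d (tw_const (inverse c)) x = (\<lambda>n. inverse c * x n)"
    using assms by (subst petit_mult_eqI) (auto simp: tw_mult_const_left petit_carrier_def)
  moreover have "petit_mult \<sigma> m d (\<lambda>n. inverse c * x n) (tw_const c)
      = (\<lambda>n. inverse c * x n * (\<sigma> ^^ n) c)"
    using assms by (subst petit_mult_eqI) (auto simp: tw_mult_const_right petit_carrier_def)
  ultimately show ?thesis
    by (simp add: G_inner_def)
qed

theorem proposition3p4:
  fixes \<sigma> :: "'a::division_ring \<Rightarrow> 'a" and m :: nat and d k :: 'a
  assumes "fin_dim_over_center TYPE('a)"
    and "ring_aut \<sigma>"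
    and "order_on_center \<sigma> m"
    and "d \<notin> fixed_center \<sigma>"
    and "k \<in> center" and "k \<noteq> 0"
    and "norm_F \<sigma> m k = 1"
    and "petit_aut \<sigma> m d (H_id \<sigma> m k)"
  shows "\<exists>c\<in>center. c \<noteq> 0 \<and> k = \<sigma> c * inverse c \<and>
           (\<forall>x\<in>petit_carrier m. H_id \<sigma> m k x = G_inner \<sigma> m d c x)"
proof -
  obtain c where c: "c \<in> center" "c \<noteq> 0" "\<sigma> c = k * c"
    using hilbert90 assms(2,3,5-7) by blast
  have "0 < m" using assms(3) by (simp add: order_on_center_def)
  have "H_id \<sigma> m k x = G_inner \<sigma> m d c x" if x: "x \<in> petit_carrier m" for x
  proof -
    have "inverse c * x n * (\<sigma> ^^ n) c = x n * partial_norm \<sigma> k n" for n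
    proof -
      have "inverse c * x n * (\<sigma> ^^ n) c = inverse c * x n * (partial_norm \<sigma> k n * c)"
        by (simp add: funpow_eigenvector[OF assms(2,5) c(3)])
      also have "\<dots> = x n * (inverse c * (c * partial_norm \<sigma> k n))"
        using center_commute[OF center_inverse[OF c(1)], of "x n"]
          center_commute[OF partial_norm_center[OF assms(2,5)], of n c]
        by (metis mult.assoc)
      also have "\<dots> = x n * partial_norm \<sigma> k n"
        using c(2) by (simp flip: mult.assoc)
      finally show ?thesis .
    qed
    then show ?thesis
      using x by (auto simp: G_inner_eq[OF assms(2) \<open>0 < m\<close> x] H_id_eq_partial_norm petit_carrier_def)
  qed
  moreover have "k = \<sigma> c * inverse c"
    using c by (simp add: mult.assoc)
  ultimately show ?thesis
    using c by blast
qed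

end
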